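(* Let $\rho\in\mathcal{P}(\mathbb{R}^n)\cap L^\infty(\mathbb{R}^n)$ be radially decreasing and let $h$ be its height function. Then: (a) $h(s)\in(0,\|\rho\|_\infty)$ for $s\in(0,1)$, $h$ is continuous, strictly increasing and convex on $(0,1)$, and $h'(s)=|\{\rho>h(s)\}|^{-1}$ for a.e. $s\in(0,1)$. (b) $\rho$ is compactly supported if and only if $\lim_{s\to0^+}h'(s)>0$; moreover $\lim_{s\to0^+}h'(s)=|\mathrm{supp}\,\rho|^{-1}$. (c) For a.e. $x\in\mathbb{R}^n$, $\rho(x)=\int_0^1 \chi_{(c_n h'(s))^{-1/n}}(x)\,h'(s)\,ds$. (d) If in addition $\rho$ is strictly decreasing in the radial variable within its support, then $h\in C^1((0,1))$ and $\lim_{s\to1^-}h'(s)=+\infty$.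
   Context: $\mathcal{P}(\mathbb{R}^n)$ denotes probability densities on $\mathbb{R}^n$. Radially decreasing means radially symmetric about the origin and nonincreasing in $|x|$. The height function $h:(0,1)\to(0,\|\rho\|_\infty)$ of $\rho$ is defined implicitly by $\int_{\mathbb{R}^n}\min\{\rho(x),h(s)\}\,dx=s$. $c_n$ is the volume of the unit ball in $\mathbb{R}^n$, and $\chi_r=1_{B(0,r)}$. *)

theory Defs
  imports "HOL-Analysis.Analysis" "HOL-Probability.Essential_Supremum"
begin

text \<open>Radially decreasing: radially symmetric about the origin and nonincreasing in the norm.
  (The condition below implies radial symmetry.)\<close>
definition radially_decreasing :: "('a::euclidean_space \<Rightarrow> real) \<Rightarrow> bool" where
  "radially_decreasing \<rho> \<longleftrightarrow> (\<forall>x y. norm x \<le> norm y \<longrightarrow> \<rho> y \<le> \<rho> x)"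

definition prob_density :: "('a::euclidean_space \<Rightarrow> real) \<Rightarrow> bool" where
  "prob_density \<rho> \<longleftrightarrow> \<rho> \<in> borel_measurable lborel \<and> (\<forall>x. 0 \<le> \<rho> x)
      \<and> integrable lborel \<rho> \<and> integral\<^sup>L lborel \<rho> = 1"

definition Linf_norm :: "('a::euclidean_space \<Rightarrow> real) \<Rightarrow> ereal" where
  "Linf_norm \<rho> = esssup lborel (\<lambda>x. ereal \<bar>\<rho> x\<bar>)"

definition unit_ball_vol :: "'a::euclidean_space itself \<Rightarrow> real" where
  "unit_ball_vol _ = measure lborel (ball (0::'a) 1)"

definition fsupp :: "('a::euclidean_space \<Rightarrow> real) \<Rightarrow> 'a set" where
  "fsupp \<rho> = closure {x. \<rho> x \<noteq> 0}"

end

theory Submission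
  imports Defs
begin

text \<open>
  The height function inverts the truncated mass \<open>F t = \<integral> min \<rho> t\<close>, which increases from
  \<open>0\<close> to \<open>1\<close> on \<open>(0, \<parallel>\<rho>\<parallel>\<^sub>\<infinity>)\<close> with right derivative \<open>|{\<rho> > t}|\<close> and left derivative
  \<open>|{\<rho> \<ge> t}|\<close>. So \<open>h\<close> has right derivative \<open>1 / |{\<rho> > h s}|\<close>, which is also the slope of a
  supporting line (whence convexity and continuity), and left derivative \<open>1 / |{\<rho> \<ge> h s}|\<close>;
  they differ only at the countably many atoms of the distribution of \<open>\<rho>\<close>.

  For radially decreasing \<open>\<rho>\<close> the superlevel set \<open>{\<rho> > h s}\<close> is, up to its boundary sphere,
  the ball of volume \<open>1 / h' s\<close>, and the layer-cake formula \<open>\<rho> x = |(0, \<rho> x)|\<close> becomes (c)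
  under the substitution \<open>t = h s\<close>. Strict radial decrease makes every level set \<open>{\<rho> = t}\<close>
  null, so \<open>h'\<close> is continuous, and \<open>h' s \<rightarrow> \<infinity>\<close> as \<open>s \<rightarrow> 1\<close> because \<open>{\<rho> > h s}\<close> shrinks to
  the null set \<open>{\<rho> \<ge> \<parallel>\<rho>\<parallel>\<^sub>\<infinity>}\<close>.
\<close>

section \<open>Radial sets and superlevel measures\<close>

lemma norm_downclosed_cases:
  fixes U :: "'a::real_normed_vector set"
  assumes downclosed: "\<And>x y. x \<in> U \<Longrightarrow> norm y \<le> norm x \<Longrightarrow> y \<in> U"
  shows "U = UNIV \<or> (\<exists>R\<ge>0. ball 0 R \<subseteq> U \<and> U \<subseteq> cball 0 R)"
proof (cases "bounded U")
  case False
  have "y \<in> U" for y :: 'a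
  proof -
    from False obtain x where "x \<in> U" "norm y < norm x"
      unfolding bounded_iff by (meson not_le)
    then show "y \<in> U" using downclosed by auto
  qed
  then show ?thesis by auto
next
  case True
  show ?thesis
  proof (cases "U = {}")
    case True
    then show ?thesis by (intro disjI2 exI[of _ 0]) auto
  next
    case False
    define R where "R = Sup (norm ` U)"
    have bdd: "bdd_above (norm ` U)"
      using \<open>bounded U\<close> by (auto simp: bounded_iff bdd_above_def)
    have "U \<subseteq> cball 0 R"
      using cSup_upper[OF _ bdd] by (auto simp: R_def)
    moreover have "ball 0 R \<subseteq> U"
    proof
      fix y assume "y \<in> ball (0::'a) R"
      then obtain x where "x \<in> U" "norm y < norm x"
        using less_cSup_iff[of "norm ` U"] False bdd by (auto simp: R_def)
      then show "y \<in> U" using downclosed by auto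
    qed
    moreover have "0 \<le> R"
      using False \<open>U \<subseteq> cball 0 R\<close> by (auto intro: order.trans[OF norm_ge_zero])
    ultimately show ?thesis by blast
  qed
qed

text \<open>The constant \<^const>\<open>Defs.unit_ball_vol\<close> shadows the library function
  \<^const>\<open>Ball_Volume.unit_ball_vol\<close>, which takes the real dimension as argument.\<close>

lemma unit_ball_vol_eq: "unit_ball_vol TYPE('a::euclidean_space) = Ball_Volume.unit_ball_vol DIM('a)"
  unfolding unit_ball_vol_def measure_def using emeasure_ball[of 1 "0::'a"] by simp

lemma unit_ball_vol_pos: "0 < unit_ball_vol TYPE('a::euclidean_space)"
  by (simp add: unit_ball_vol_eq)

lemma emeasure_lborel_between_ball_cball:
  fixes U :: "'a::euclidean_space set"
  assumes "ball 0 R \<subseteq> U" "U \<subseteq> cball 0 R" "U \<in> sets lborel" "0 \<le> R"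
  shows "emeasure lborel U = ennreal (unit_ball_vol TYPE('a) * R ^ DIM('a))"
proof (rule order.antisym)
  show "emeasure lborel U \<le> ennreal (unit_ball_vol TYPE('a) * R ^ DIM('a))"
    using emeasure_mono[OF assms(2), of lborel] emeasure_cball[OF assms(4), of "0::'a"]
    by (simp add: unit_ball_vol_eq)
  show "ennreal (unit_ball_vol TYPE('a) * R ^ DIM('a)) \<le> emeasure lborel U"
    using emeasure_mono[OF assms(1,3)] emeasure_ball[OF assms(4), of "0::'a"]
    by (simp add: unit_ball_vol_eq)
qed

lemma sphere_in_null_sets_lborel: "sphere (c::'a::euclidean_space) r \<in> null_sets lborel"
  using negligible_sphere[of c r]
  by (auto simp: null_sets_completion_iff negligible_iff_null_sets negligible_convex_frontier)

lemma tendsto_emeasure_superlevel_at_right: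
  fixes f :: "'a \<Rightarrow> real"
  assumes [measurable]: "f \<in> borel_measurable M"
  shows "((\<lambda>u. emeasure M {x\<in>space M. u < f x}) \<longlongrightarrow> emeasure M {x\<in>space M. t < f x}) (at_right t)"
proof (rule tendsto_at_right_sequentially[of t "t + 1"])
  fix S :: "nat \<Rightarrow> real"
  assume S: "\<And>n. t < S n" "decseq S" "S \<longlonglongrightarrow> t"
  have "(\<Union>n. {x\<in>space M. S n < f x}) = {x\<in>space M. t < f x}"
  proof safe
    fix x n assume "S n < f x"
    then show "t < f x" using S(1)[of n] by linarith
  next
    fix x assume "x \<in> space M" "t < f x"
    then obtain n where "S n < f x"
      using order_tendstoD(2)[OF S(3), of "f x"] by (auto dest: eventually_happens)
    then show "x \<in> (\<Union>n. {x\<in>space M. S n < f x})" using \<open>x \<in> space M\<close> by auto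
  qed
  moreover have "(\<lambda>n. emeasure M {x\<in>space M. S n < f x})
      \<longlonglongrightarrow> emeasure M (\<Union>n. {x\<in>space M. S n < f x})"
    using S(2) by (intro Lim_emeasure_incseq) (auto simp: incseq_def decseq_def intro: le_less_trans)
  ultimately show "(\<lambda>n. emeasure M {x\<in>space M. S n < f x}) \<longlonglongrightarrow> emeasure M {x\<in>space M. t < f x}"
    by simp
qed simp

lemma tendsto_emeasure_superlevel_ge_at_right:
  fixes f :: "'a \<Rightarrow> real"
  assumes [measurable]: "f \<in> borel_measurable M"
  shows "((\<lambda>u. emeasure M {x\<in>space M. u \<le> f x}) \<longlongrightarrow> emeasure M {x\<in>space M. t < f x}) (at_right t)"
proof (rule tendsto_sandwich[OF _ _ tendsto_emeasure_superlevel_at_right[OF assms] tendsto_const])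
  show "\<forall>\<^sub>F u in at_right t. emeasure M {x\<in>space M. u < f x} \<le> emeasure M {x\<in>space M. u \<le> f x}"
    by (intro always_eventually allI emeasure_mono) auto
  show "\<forall>\<^sub>F u in at_right t. emeasure M {x\<in>space M. u \<le> f x} \<le> emeasure M {x\<in>space M. t < f x}"
    using eventually_at_right_less[of t]
    by eventually_elim (intro emeasure_mono, auto)
qed

lemma tendsto_emeasure_superlevel_at_left:
  fixes f :: "'a \<Rightarrow> real"
  assumes [measurable]: "f \<in> borel_measurable M"
    and "t' < t" and finite: "emeasure M {x\<in>space M. t' < f x} \<noteq> \<infinity>"
  shows "((\<lambda>u. emeasure M {x\<in>space M. u < f x}) \<longlongrightarrow> emeasure M {x\<in>space M. t \<le> f x}) (at_left t)"
proof (rule tendsto_at_left_sequentially[OF \<open>t' < t\<close>])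
  fix S :: "nat \<Rightarrow> real"
  assume S: "\<And>n. S n < t" "\<And>n. t' < S n" "incseq S" "S \<longlonglongrightarrow> t"
  have "(\<Inter>n. {x\<in>space M. S n < f x}) = {x\<in>space M. t \<le> f x}"
  proof safe
    fix x assume "x \<in> (\<Inter>n. {x\<in>space M. S n < f x})"
    then have "S n \<le> f x" for n by (auto intro: less_imp_le)
    then show "t \<le> f x" using LIMSEQ_le_const2[OF S(4)] by blast
  qed (use S(1) less_le_trans in auto)
  moreover have "emeasure M {x\<in>space M. S n < f x} \<noteq> \<infinity>" for n
  proof -
    have "emeasure M {x\<in>space M. S n < f x} \<le> emeasure M {x\<in>space M. t' < f x}"
      using S(2)[of n] by (intro emeasure_mono) auto
    then show ?thesis using finite by (auto simp: top_unique)
  qed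
  then have "(\<lambda>n. emeasure M {x\<in>space M. S n < f x})
      \<longlonglongrightarrow> emeasure M (\<Inter>n. {x\<in>space M. S n < f x})"
    using S(3) by (intro Lim_emeasure_decseq) (auto simp: incseq_def decseq_def intro: le_less_trans)
  ultimately show "(\<lambda>n. emeasure M {x\<in>space M. S n < f x}) \<longlonglongrightarrow> emeasure M {x\<in>space M. t \<le> f x}"
    by simp
qed

section \<open>Monotone and convex functions of one variable\<close>

lemma convex_on_supporting_lines:
  fixes f :: "real \<Rightarrow> real"
  assumes "convex I" and support: "\<And>z. z \<in> I \<Longrightarrow> \<exists>K. \<forall>w\<in>I. f z + K * (w - z) \<le> f w"
  shows "convex_on I f"
proof (rule convex_onI[OF _ \<open>convex I\<close>])
  fix t x y :: real
  assume t: "0 < t" "t < 1" and xy: "x \<in> I" "y \<in> I"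
  define z where "z = (1 - t) * x + t * y"
  have "z \<in> I" using convexD[OF \<open>convex I\<close> xy, of "1 - t" t] t by (simp add: z_def)
  then obtain K where K: "\<forall>w\<in>I. f z + K * (w - z) \<le> f w" using support by blast
  have "f z = (1 - t) * (f z + K * (x - z)) + t * (f z + K * (y - z))"
    by (simp add: z_def algebra_simps)
  also have "\<dots> \<le> (1 - t) * f x + t * f y"
    using K xy t by (intro add_mono mult_left_mono) auto
  finally show "f ((1 - t) *\<^sub>R x + t *\<^sub>R y) \<le> (1 - t) * f x + t * f y"
    by (simp add: z_def)
qed

lemma filterlim_at_right_lower_endpoint_mono_on:
  fixes f :: "real \<Rightarrow> real"
  assumes mono: "mono_on {a<..<b} f" and image: "f ` {a<..<b} = {c<..<d}" and "a < b"
  shows "filterlim f (at_right c) (at_right a)"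
proof -
  have range: "f s \<in> {c<..<d}" if "s \<in> {a<..<b}" for s
    using image that by blast
  have "c < d" using range[of "(a + b) / 2"] \<open>a < b\<close> by auto
  have "(f \<longlongrightarrow> c) (at_right a)"
  proof (rule order_tendstoI)
    fix e assume "c < e"
    then have "(c + min e d) / 2 \<in> f ` {a<..<b}"
      using image \<open>c < d\<close> by auto
    then obtain s0 where s0: "s0 \<in> {a<..<b}" "f s0 = (c + min e d) / 2"
      by (metis imageE)
    from s0(1) have "\<forall>\<^sub>F s in at_right a. s \<in> {a<..<s0}"
      by (intro eventually_at_right_real) simp
    then show "\<forall>\<^sub>F s in at_right a. f s < e"
    proof eventually_elim
      case (elim s)
      then have "f s \<le> f s0" using mono_onD[OF mono] s0(1) by auto
      then show ?case using s0(2) \<open>c < d\<close> \<open>c < e\<close> by (auto simp: min_def split: if_splits)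
    qed
  next
    fix e assume "e < c"
    show "\<forall>\<^sub>F s in at_right a. e < f s"
      using eventually_at_right_real[OF \<open>a < b\<close>]
      by eventually_elim (use range \<open>e < c\<close> in force)
  qed
  moreover have "\<forall>\<^sub>F s in at_right a. f s \<in> {c<..} \<and> f s \<noteq> c"
    using eventually_at_right_real[OF \<open>a < b\<close>] by eventually_elim (use range in auto)
  ultimately show ?thesis by (simp add: filterlim_at)
qed

lemma filterlim_at_left_upper_endpoint_mono_on:
  fixes f :: "real \<Rightarrow> real"
  assumes mono: "mono_on {a<..<b} f" and image: "f ` {a<..<b} = {c<..<d}" and "a < b"
  shows "filterlim f (at_left d) (at_left b)"
proof -
  have range: "f s \<in> {c<..<d}" if "s \<in> {a<..<b}" for s
    using image that by blast
  have "c < d" using range[of "(a + b) / 2"] \<open>a < b\<close> by auto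
  have "(f \<longlongrightarrow> d) (at_left b)"
  proof (rule order_tendstoI)
    fix e assume "e < d"
    then have "(max e c + d) / 2 \<in> f ` {a<..<b}"
      using image \<open>c < d\<close> by auto
    then obtain s0 where s0: "s0 \<in> {a<..<b}" "f s0 = (max e c + d) / 2"
      by (metis imageE)
    from s0(1) have "\<forall>\<^sub>F s in at_left b. s \<in> {s0<..<b}"
      by (intro eventually_at_left_real) simp
    then show "\<forall>\<^sub>F s in at_left b. e < f s"
    proof eventually_elim
      case (elim s)
      then have "f s0 \<le> f s" using mono_onD[OF mono] s0(1) by auto
      then show ?case using s0(2) \<open>c < d\<close> \<open>e < d\<close> by (auto simp: max_def split: if_splits)
    qed
  next
    fix e assume "d < e"
    show "\<forall>\<^sub>F s in at_left b. f s < e"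
      using eventually_at_left_real[OF \<open>a < b\<close>]
      by eventually_elim (use range \<open>d < e\<close> in force)
  qed
  moreover have "\<forall>\<^sub>F s in at_left b. f s \<in> {..<d} \<and> f s \<noteq> d"
    using eventually_at_left_real[OF \<open>a < b\<close>] by eventually_elim (use range in auto)
  ultimately show ?thesis by (simp add: filterlim_at)
qed

lemma filterlim_one_sided_strict_mono_on:
  fixes f :: "real \<Rightarrow> real"
  assumes mono: "strict_mono_on {a<..<b} f" and cont: "isCont f s" and s: "s \<in> {a<..<b}"
  shows "filterlim f (at_right (f s)) (at_right s)" "filterlim f (at_left (f s)) (at_left s)"
proof -
  have lim: "(f \<longlongrightarrow> f s) (at_right s)" "(f \<longlongrightarrow> f s) (at_left s)"
    using cont by (simp_all add: isCont_def filterlim_at_split)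
  have "a < s" "s < b" using s by auto
  have "\<forall>\<^sub>F x in at_right s. f x \<in> {f s<..} \<and> f x \<noteq> f s"
    using eventually_at_right_real[OF \<open>s < b\<close>]
  proof eventually_elim
    case (elim x)
    then have "f s < f x" using strict_mono_onD[OF mono, of s x] s by auto
    then show ?case by simp
  qed
  moreover have "\<forall>\<^sub>F x in at_left s. f x \<in> {..<f s} \<and> f x \<noteq> f s"
    using eventually_at_left_real[OF \<open>a < s\<close>]
  proof eventually_elim
    case (elim x)
    then have "f x < f s" using strict_mono_onD[OF mono, of x s] s by auto
    then show ?case by simp
  qed
  ultimately show "filterlim f (at_right (f s)) (at_right s)" "filterlim f (at_left (f s)) (at_left s)"
    using lim by (simp_all add: filterlim_at)
qed

lemma antimono_on_eq_unique:
  fixes f :: "real \<Rightarrow> 'b::order"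
  assumes mono: "antimono_on {a<..<b} f" and rationals: "\<forall>q\<in>\<rat> \<inter> {a<..<b}. f q \<noteq> c"
    and s: "s1 \<in> {a<..<b}" "s2 \<in> {a<..<b}" "f s1 = c" "f s2 = c"
  shows "s1 = s2"
proof (rule ccontr)
  assume "s1 \<noteq> s2"
  then obtain l u where lu: "l < u" "l \<in> {a<..<b}" "u \<in> {a<..<b}" "f l = c" "f u = c"
    using s by (metis linorder_neq_iff)
  then obtain q where q: "q \<in> \<rat>" "l < q" "q < u"
    using Rats_dense_in_real by blast
  then have "q \<in> {a<..<b}" using lu by auto
  then have "f u \<le> f q" "f q \<le> f l"
    using monotone_onD[OF mono, of q u] monotone_onD[OF mono, of l q] lu(1-3) q(2,3) by simp_all
  then have "f q = c" using lu by (auto intro: order.antisym)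
  then show False using rationals q lu by auto
qed

section \<open>The truncated mass of a bounded density\<close>

locale bounded_density =
  fixes \<rho> :: "'a::euclidean_space \<Rightarrow> real" and M :: real
  assumes density_measurable [measurable]: "\<rho> \<in> borel_measurable lborel"
    and density_nonneg: "\<And>x. 0 \<le> \<rho> x"
    and density_integrable: "integrable lborel \<rho>"
    and density_integral: "integral\<^sup>L lborel \<rho> = 1"
    and esssup_density: "esssup lborel (\<lambda>x. ereal (\<rho> x)) = ereal M"
begin

definition trunc_mass :: "real \<Rightarrow> real" where
  "trunc_mass t = integral\<^sup>L lborel (\<lambda>x. min (\<rho> x) t)"

definition level_gt :: "real \<Rightarrow> real" where
  "level_gt t = measure lborel {x. t < \<rho> x}"

definition level_ge :: "real \<Rightarrow> real" where
  "level_ge t = measure lborel {x. t \<le> \<rho> x}"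

lemma AE_density_le: "AE x in lborel. \<rho> x \<le> M"
  using esssup_AE[of "\<lambda>x. ereal (\<rho> x)" lborel] esssup_density by simp

lemma null_sets_superlevel_M: "{x. M < \<rho> x} \<in> null_sets lborel"
  using AE_density_le by (subst (asm) AE_iff_null) (auto simp: not_le)

lemma emeasure_superlevel_pos: "t < M \<Longrightarrow> 0 < emeasure lborel {x. t < \<rho> x}"
  using esssup_pos_measure[of "\<lambda>x. ereal (\<rho> x)" lborel "ereal t"] esssup_density by simp

lemma M_pos: "0 < M"
proof (rule ccontr)
  assume "\<not> 0 < M"
  have "AE x in lborel. \<rho> x = 0"
    using AE_density_le
  proof eventually_elim
    case (elim x)
    then show ?case using \<open>\<not> 0 < M\<close> density_nonneg[of x] by linarith
  qed
  then have "integral\<^sup>L lborel \<rho> = 0"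
    using integral_cong_AE[of \<rho> lborel "\<lambda>x. 0"] by simp
  then show False using density_integral by simp
qed

lemma emeasure_superlevel_ge_finite:
  assumes "0 < t" shows "emeasure lborel {x. t \<le> \<rho> x} < \<infinity>"
proof -
  have "ennreal t * emeasure lborel {x. t \<le> \<rho> x}
      = (\<integral>\<^sup>+ x. ennreal t * indicator {x. t \<le> \<rho> x} x \<partial>lborel)"
    by (simp add: nn_integral_cmult_indicator)
  also have "\<dots> \<le> (\<integral>\<^sup>+ x. ennreal (\<rho> x) \<partial>lborel)"
    by (intro nn_integral_mono) (auto simp: indicator_def intro: ennreal_leI)
  also have "\<dots> = 1"
    using nn_integral_eq_integral[OF density_integrable] density_nonneg density_integral by simp
  finally have bound: "ennreal t * emeasure lborel {x. t \<le> \<rho> x} \<le> 1" .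
  show ?thesis
  proof (rule ccontr)
    assume "\<not> ?thesis"
    then have "ennreal t * emeasure lborel {x. t \<le> \<rho> x} = \<infinity>"
      using assms by (simp add: less_top[symmetric] ennreal_mult_top)
    then show False using bound by (simp add: top_unique)
  qed
qed

lemma emeasure_superlevel_finite:
  assumes "0 < t" shows "emeasure lborel {x. t < \<rho> x} < \<infinity>"
proof -
  have "emeasure lborel {x. t < \<rho> x} \<le> emeasure lborel {x. t \<le> \<rho> x}"
    by (intro emeasure_mono) auto
  then show ?thesis using emeasure_superlevel_ge_finite[OF assms] by (rule le_less_trans)
qed

lemma emeasure_superlevel_eq: "0 < t \<Longrightarrow> emeasure lborel {x. t < \<rho> x} = ennreal (level_gt t)"
  unfolding level_gt_def using emeasure_superlevel_finite
  by (intro emeasure_eq_ennreal_measure) (auto simp: less_top)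

lemma emeasure_superlevel_ge_eq: "0 < t \<Longrightarrow> emeasure lborel {x. t \<le> \<rho> x} = ennreal (level_ge t)"
  unfolding level_ge_def using emeasure_superlevel_ge_finite
  by (intro emeasure_eq_ennreal_measure) (auto simp: less_top)

lemma level_gt_le_level_ge: "0 < t \<Longrightarrow> level_gt t \<le> level_ge t"
  unfolding level_gt_def level_ge_def using emeasure_superlevel_ge_finite
  by (intro measure_mono_fmeasurable) (auto simp: fmeasurable_def)

lemma level_gt_pos: "0 < t \<Longrightarrow> t < M \<Longrightarrow> 0 < level_gt t"
  using emeasure_superlevel_pos emeasure_superlevel_eq by force

lemma level_ge_pos: "0 < t \<Longrightarrow> t < M \<Longrightarrow> 0 < level_ge t"
  using level_gt_pos level_gt_le_level_ge by force

lemma level_gt_antimono: "0 < t1 \<Longrightarrow> t1 \<le> t2 \<Longrightarrow> level_gt t2 \<le> level_gt t1"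
  unfolding level_gt_def using emeasure_superlevel_finite
  by (intro measure_mono_fmeasurable) (auto simp: fmeasurable_def)

lemma level_ge_antimono: "0 < t1 \<Longrightarrow> t1 \<le> t2 \<Longrightarrow> level_ge t2 \<le> level_ge t1"
  unfolding level_ge_def using emeasure_superlevel_ge_finite
  by (intro measure_mono_fmeasurable) (auto simp: fmeasurable_def)

lemma integrable_min_density: "0 \<le> t \<Longrightarrow> integrable lborel (\<lambda>x. min (\<rho> x) t)"
  by (rule Bochner_Integration.integrable_bound[OF density_integrable]) (use density_nonneg in auto)

text \<open>Raising the truncation level from \<open>t1\<close> to \<open>t2\<close> adds mass only on \<open>{t1 < \<rho>}\<close>,
  and adds the full amount \<open>t2 - t1\<close> on \<open>{t2 \<le> \<rho>}\<close>.\<close>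

lemma trunc_mass_increment_le:
  assumes "0 < t1" "t1 \<le> t2"
  shows "trunc_mass t2 - trunc_mass t1 \<le> (t2 - t1) * level_gt t1"
proof -
  have "trunc_mass t2 - trunc_mass t1 = integral\<^sup>L lborel (\<lambda>x. min (\<rho> x) t2 - min (\<rho> x) t1)"
    unfolding trunc_mass_def using assms by (simp add: integrable_min_density)
  also have "\<dots> \<le> integral\<^sup>L lborel (\<lambda>x. (t2 - t1) * indicator {x. t1 < \<rho> x} x)"
    using assms emeasure_superlevel_finite[OF assms(1)]
    by (intro integral_mono integrable_mult_right integrable_real_indicator)
      (auto simp: indicator_def integrable_min_density)
  also have "\<dots> = (t2 - t1) * level_gt t1"
    by (simp add: level_gt_def)
  finally show ?thesis .
qed

lemma trunc_mass_increment_ge: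
  assumes "0 \<le> t1" "t1 \<le> t2" "0 < t2"
  shows "(t2 - t1) * level_ge t2 \<le> trunc_mass t2 - trunc_mass t1"
proof -
  have "(t2 - t1) * level_ge t2 = integral\<^sup>L lborel (\<lambda>x. (t2 - t1) * indicator {x. t2 \<le> \<rho> x} x)"
    by (simp add: level_ge_def)
  also have "\<dots> \<le> integral\<^sup>L lborel (\<lambda>x. min (\<rho> x) t2 - min (\<rho> x) t1)"
    using assms density_nonneg emeasure_superlevel_ge_finite[OF assms(3)]
    by (intro integral_mono integrable_mult_right integrable_real_indicator)
      (auto simp: indicator_def integrable_min_density)
  also have "\<dots> = trunc_mass t2 - trunc_mass t1"
    unfolding trunc_mass_def using assms by (simp add: integrable_min_density)
  finally show ?thesis .
qed

lemma trunc_mass_nonpos: assumes "t \<le> 0" shows "trunc_mass t = 0"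
proof (cases "t = 0")
  case True
  then show ?thesis using density_nonneg by (simp add: trunc_mass_def min_absorb2)
next
  case False
  text \<open>A nonzero constant is not Lebesgue integrable, so the Bochner integral is the junk value 0.\<close>
  have "min (\<rho> x) t = t" for x
    using density_nonneg[of x] assms by (auto simp: min_def)
  then have "(\<lambda>x. min (\<rho> x) t) = (\<lambda>x. t)" by simp
  moreover have "\<not> integrable lborel (\<lambda>x::'a. t)"
    using False by (simp add: integrable_iff_bounded nn_integral_const ennreal_mult_top)
  ultimately show ?thesis unfolding trunc_mass_def by (metis not_integrable_integral_eq)
qed

lemma trunc_mass_ge_M: assumes "M \<le> t" shows "trunc_mass t = 1"
proof -
  have "trunc_mass t = integral\<^sup>L lborel \<rho>"
    unfolding trunc_mass_def by (rule integral_cong_AE) (use AE_density_le assms in auto)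
  then show ?thesis using density_integral by simp
qed

lemma trunc_mass_mono: assumes "0 \<le> t1" "t1 \<le> t2" shows "trunc_mass t1 \<le> trunc_mass t2"
proof (cases "t1 = t2")
  case False
  then have "0 \<le> (t2 - t1) * level_ge t2" "0 < t2"
    using assms by (auto simp: level_ge_def)
  then show ?thesis using trunc_mass_increment_ge[of t1 t2] assms by linarith
qed simp

lemma trunc_mass_less: assumes "0 \<le> t1" "t1 < t2" "t2 < M" shows "trunc_mass t1 < trunc_mass t2"
proof -
  have "0 < (t2 - t1) * level_ge t2" using assms level_ge_pos[of t2] by simp
  then show ?thesis using trunc_mass_increment_ge[of t1 t2] assms by linarith
qed

lemma trunc_mass_range: assumes "0 < t" "t < M" shows "0 < trunc_mass t" "trunc_mass t < 1"
  using trunc_mass_less[of 0 t] trunc_mass_less[of t "(t + M) / 2"]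
    trunc_mass_mono[of "(t + M) / 2" M] trunc_mass_nonpos[of 0] trunc_mass_ge_M[of M] assms
  by auto

lemma level_gt_eq_enn2real: "level_gt = (\<lambda>u. enn2real (emeasure lborel {x. u < \<rho> x}))"
  by (simp add: fun_eq_iff level_gt_def measure_def)

lemma level_ge_eq_enn2real: "level_ge = (\<lambda>u. enn2real (emeasure lborel {x. u \<le> \<rho> x}))"
  by (simp add: fun_eq_iff level_ge_def measure_def)

lemma level_ge_tendsto_at_right: assumes "0 < t" shows "(level_ge \<longlongrightarrow> level_gt t) (at_right t)"
proof -
  have "((\<lambda>u. emeasure lborel {x. u \<le> \<rho> x}) \<longlongrightarrow> ennreal (level_gt t)) (at_right t)"
    using tendsto_emeasure_superlevel_ge_at_right[OF density_measurable, of t]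
    by (simp add: emeasure_superlevel_eq[OF assms])
  from tendsto_enn2real[OF this] show ?thesis
    by (simp add: level_ge_eq_enn2real level_gt_def)
qed

lemma level_gt_tendsto_at_right: assumes "0 < t" shows "(level_gt \<longlongrightarrow> level_gt t) (at_right t)"
proof -
  have "((\<lambda>u. emeasure lborel {x. u < \<rho> x}) \<longlongrightarrow> ennreal (level_gt t)) (at_right t)"
    using tendsto_emeasure_superlevel_at_right[OF density_measurable, of t]
    by (simp add: emeasure_superlevel_eq[OF assms])
  from tendsto_enn2real[OF this] show ?thesis
    by (simp add: level_gt_eq_enn2real level_gt_def)
qed

lemma level_gt_tendsto_at_left: assumes "0 < t" shows "(level_gt \<longlongrightarrow> level_ge t) (at_left t)"
proof -
  have "((\<lambda>u. emeasure lborel {x. u < \<rho> x}) \<longlongrightarrow> ennreal (level_ge t)) (at_left t)"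
    using tendsto_emeasure_superlevel_at_left[OF density_measurable, of "t / 2" t]
      emeasure_superlevel_finite[of "t / 2"] assms
    by (simp add: emeasure_superlevel_ge_eq[OF assms])
  from tendsto_enn2real[OF this] show ?thesis
    by (simp add: level_gt_eq_enn2real level_ge_def)
qed

text \<open>Where \<open>{\<rho> = t}\<close> has positive measure, the monotone function \<^const>\<open>level_ge\<close> jumps.\<close>

lemma countable_level_jumps: "countable {t\<in>{0<..}. level_ge t \<noteq> level_gt t}"
proof -
  have "mono_on {0<..} (\<lambda>t. - level_ge t)"
    by (rule mono_onI) (use level_ge_antimono in auto)
  then have "countable {t\<in>{0<..}. \<not> isCont (\<lambda>t. - level_ge t) t}"
    by (intro mono_on_ctble_discont_open) auto
  moreover have "{t\<in>{0<..}. level_ge t \<noteq> level_gt t} \<subseteq> {t\<in>{0<..}. \<not> isCont (\<lambda>t. - level_ge t) t}"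
  proof safe
    fix t :: real
    assume t: "0 < t" "level_ge t \<noteq> level_gt t" and cont: "isCont (\<lambda>t. - level_ge t) t"
    have "isCont (\<lambda>t. - (- level_ge t)) t" using cont by (rule continuous_minus)
    then have "(level_ge \<longlongrightarrow> level_ge t) (at_right t)"
      by (simp add: isCont_def filterlim_at_split)
    then show False
      using tendsto_unique[OF _ _ level_ge_tendsto_at_right[OF t(1)]] t by auto
  qed
  ultimately show ?thesis by (rule countable_subset[rotated])
qed

lemma inverse_level_gt_tendsto_at_0:
  "((\<lambda>u. 1 / level_gt u) \<longlongrightarrow>
      (if emeasure lborel {x. 0 < \<rho> x} = \<infinity> then 0 else 1 / measure lborel {x. 0 < \<rho> x})) (at_right 0)"
proof -
  have lim: "((\<lambda>u. emeasure lborel {x. u < \<rho> x}) \<longlongrightarrow> emeasure lborel {x. 0 < \<rho> x}) (at_right 0)"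
    using tendsto_emeasure_superlevel_at_right[OF density_measurable, of 0] by simp
  show ?thesis
  proof (cases "emeasure lborel {x. 0 < \<rho> x} = \<infinity>")
    case True
    have "filterlim level_gt at_top (at_right 0)"
      unfolding filterlim_at_top
    proof
      fix Z :: real
      have "\<forall>\<^sub>F u in at_right 0. ennreal (max Z 0) < emeasure lborel {x. u < \<rho> x}"
        using lim True by (intro order_tendstoD(1)) auto
      then show "\<forall>\<^sub>F u in at_right 0. Z \<le> level_gt u"
        using eventually_at_right_less[of 0]
        by eventually_elim (auto simp: emeasure_superlevel_eq ennreal_less_iff)
    qed
    then have "((\<lambda>u. inverse (level_gt u)) \<longlongrightarrow> 0) (at_right 0)"
      by (rule tendsto_inverse_0_at_top)
    then show ?thesis using True by (simp add: inverse_eq_divide)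
  next
    case False
    have "0 < measure lborel {x. 0 < \<rho> x}"
      using emeasure_superlevel_pos[OF M_pos] False
      by (simp add: measure_def enn2real_positive_iff less_top)
    moreover have "(level_gt \<longlongrightarrow> measure lborel {x. 0 < \<rho> x}) (at_right 0)"
      using tendsto_enn2real[OF lim[unfolded emeasure_eq_ennreal_measure[OF False[unfolded infinity_ennreal_def]]]]
      by (simp add: level_gt_eq_enn2real measure_def)
    ultimately show ?thesis using False by (auto intro!: tendsto_divide tendsto_const)
  qed
qed

end

section \<open>The height function\<close>

locale height_function = bounded_density +
  fixes h :: "real \<Rightarrow> real"
  assumes height: "\<And>s. 0 < s \<Longrightarrow> s < 1 \<Longrightarrow> integral\<^sup>L lborel (\<lambda>x. min (\<rho> x) (h s)) = s"
begin

lemma trunc_mass_height: "0 < s \<Longrightarrow> s < 1 \<Longrightarrow> trunc_mass (h s) = s"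
  using height by (simp add: trunc_mass_def)

lemma height_range: assumes "0 < s" "s < 1" shows "0 < h s" "h s < M"
proof -
  show "0 < h s"
    using trunc_mass_nonpos[of "h s"] trunc_mass_height[OF assms] assms by fastforce
  show "h s < M"
    using trunc_mass_ge_M[of "h s"] trunc_mass_height[OF assms] assms by fastforce
qed

lemma height_less: assumes "0 < s1" "s1 < s2" "s2 < 1" shows "h s1 < h s2"
proof (rule ccontr)
  assume "\<not> h s1 < h s2"
  then have "trunc_mass (h s2) \<le> trunc_mass (h s1)"
    using trunc_mass_mono[of "h s2" "h s1"] height_range[of s2] assms by auto
  then show False using trunc_mass_height[of s1] trunc_mass_height[of s2] assms by auto
qed

lemma height_strict_mono: "strict_mono_on {0<..<1} h"
  by (rule strict_mono_onI) (use height_less in auto)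

lemma height_trunc_mass: assumes "0 < t" "t < M" shows "h (trunc_mass t) = t"
proof -
  have s: "0 < trunc_mass t" "trunc_mass t < 1" using trunc_mass_range[OF assms] by auto
  have "trunc_mass (h (trunc_mass t)) = trunc_mass t"
    using trunc_mass_height[OF s] .
  moreover have "0 < h (trunc_mass t)" "h (trunc_mass t) < M" using height_range[OF s] by auto
  ultimately show ?thesis
    using trunc_mass_less[of "h (trunc_mass t)" t] trunc_mass_less[of t "h (trunc_mass t)"] assms
    by (cases "h (trunc_mass t)" t rule: linorder_cases) auto
qed

lemma height_image: "h ` {0<..<1} = {0<..<M}"
proof
  show "h ` {0<..<1} \<subseteq> {0<..<M}" using height_range by auto
  show "{0<..<M} \<subseteq> h ` {0<..<1}"
  proof
    fix t assume "t \<in> {0<..<M}"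
    then show "t \<in> h ` {0<..<1}"
      using height_trunc_mass[of t] trunc_mass_range[of t] by (intro image_eqI[of _ _ "trunc_mass t"]) auto
  qed
qed

lemma height_increments:
  assumes "0 < s1" "s1 < s2" "s2 < 1"
  shows "(s2 - s1) / level_gt (h s1) \<le> h s2 - h s1" "h s2 - h s1 \<le> (s2 - s1) / level_ge (h s2)"
proof -
  have r: "0 < h s1" "h s1 < M" "0 < h s2" "h s2 < M" "h s1 < h s2"
    using height_range[of s1] height_range[of s2] height_less[OF assms] assms by auto
  have "s2 - s1 \<le> (h s2 - h s1) * level_gt (h s1)"
    using trunc_mass_increment_le[of "h s1" "h s2"] trunc_mass_height[of s1] trunc_mass_height[of s2] r assms
    by auto
  then show "(s2 - s1) / level_gt (h s1) \<le> h s2 - h s1"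
    using level_gt_pos[of "h s1"] r by (simp add: divide_le_eq)
  have "(h s2 - h s1) * level_ge (h s2) \<le> s2 - s1"
    using trunc_mass_increment_ge[of "h s1" "h s2"] trunc_mass_height[of s1] trunc_mass_height[of s2] r assms
    by auto
  then show "h s2 - h s1 \<le> (s2 - s1) / level_ge (h s2)"
    using level_ge_pos[of "h s2"] r by (simp add: le_divide_eq)
qed

lemma height_supporting_line:
  assumes s: "s \<in> {0<..<1}" and w: "w \<in> {0<..<1}"
  shows "h s + (w - s) / level_gt (h s) \<le> h w"
proof (cases s w rule: linorder_cases)
  case less
  then show ?thesis using height_increments(1)[of s w] s w by auto
next
  case greater
  have r: "0 < h s" "h s < M" using height_range s by auto
  have "h s - h w \<le> (s - w) / level_ge (h s)"
    using height_increments(2)[of w s] greater s w by auto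
  also have "\<dots> \<le> (s - w) / level_gt (h s)"
    using greater level_gt_pos[OF r] level_gt_le_level_ge[OF r(1)] by (intro divide_left_mono) auto
  finally show ?thesis unfolding diff_divide_distrib by linarith
qed simp

lemma height_convex: "convex_on {0<..<1} h"
proof (rule convex_on_supporting_lines)
  fix z assume "z \<in> {0<..<1::real}"
  then show "\<exists>K. \<forall>w\<in>{0<..<1}. h z + K * (w - z) \<le> h w"
    using height_supporting_line by (intro exI[of _ "1 / level_gt (h z)"]) auto
qed simp

lemma height_continuous: "continuous_on {0<..<1} h"
  by (rule convex_on_continuous[OF _ height_convex]) simp

lemma height_isCont: "s \<in> {0<..<1} \<Longrightarrow> isCont h s"
  using height_continuous continuous_on_eq_continuous_at[of "{0<..<1}" h] by simp

lemma height_right_derivative: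
  assumes "s \<in> {0<..<1}"
  shows "((\<lambda>y. (h y - h s) / (y - s)) \<longlongrightarrow> 1 / level_gt (h s)) (at_right s)"
proof -
  have r: "0 < h s" "h s < M" using height_range assms by auto
  have "((\<lambda>y. level_ge (h y)) \<longlongrightarrow> level_gt (h s)) (at_right s)"
    using level_ge_tendsto_at_right[OF r(1)]
      filterlim_one_sided_strict_mono_on(1)[OF height_strict_mono height_isCont[OF assms] assms]
    by (rule filterlim_compose)
  then have lim: "((\<lambda>y. 1 / level_ge (h y)) \<longlongrightarrow> 1 / level_gt (h s)) (at_right s)"
    using level_gt_pos[OF r] by (intro tendsto_divide tendsto_const) auto
  have ev: "\<forall>\<^sub>F y in at_right s. y \<in> {s<..<1}"
    using eventually_at_right_real assms by simp
  have lower: "\<forall>\<^sub>F y in at_right s. 1 / level_gt (h s) \<le> (h y - h s) / (y - s)"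
    using ev
  proof eventually_elim
    case (elim y)
    then have "(y - s) / level_gt (h s) \<le> h y - h s" using height_increments(1)[of s y] assms by auto
    then show ?case using elim by (simp add: pos_le_divide_eq)
  qed
  have upper: "\<forall>\<^sub>F y in at_right s. (h y - h s) / (y - s) \<le> 1 / level_ge (h y)"
    using ev
  proof eventually_elim
    case (elim y)
    then have "h y - h s \<le> (y - s) / level_ge (h y)" using height_increments(2)[of s y] assms by auto
    moreover have "0 < level_ge (h y)" using height_range[of y] elim assms by (intro level_ge_pos) auto
    ultimately show ?case using elim by (simp add: pos_divide_le_eq)
  qed
  show ?thesis by (rule tendsto_sandwich[OF lower upper tendsto_const lim])
qed

lemma height_left_derivative:
  assumes "s \<in> {0<..<1}"
  shows "((\<lambda>y. (h y - h s) / (y - s)) \<longlongrightarrow> 1 / level_ge (h s)) (at_left s)"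
proof -
  have r: "0 < h s" "h s < M" using height_range assms by auto
  have "((\<lambda>y. level_gt (h y)) \<longlongrightarrow> level_ge (h s)) (at_left s)"
    using level_gt_tendsto_at_left[OF r(1)]
      filterlim_one_sided_strict_mono_on(2)[OF height_strict_mono height_isCont[OF assms] assms]
    by (rule filterlim_compose)
  then have lim: "((\<lambda>y. 1 / level_gt (h y)) \<longlongrightarrow> 1 / level_ge (h s)) (at_left s)"
    using level_ge_pos[OF r] by (intro tendsto_divide tendsto_const) auto
  have ev: "\<forall>\<^sub>F y in at_left s. y \<in> {0<..<s}"
    using eventually_at_left_real assms by simp
  have quotient: "(h y - h s) / (y - s) = (h s - h y) / (s - y)" for y
    by (metis minus_diff_eq minus_divide_divide)
  have lower: "\<forall>\<^sub>F y in at_left s. 1 / level_gt (h y) \<le> (h y - h s) / (y - s)"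
    using ev
  proof eventually_elim
    case (elim y)
    then have "(s - y) / level_gt (h y) \<le> h s - h y" using height_increments(1)[of y s] assms by auto
    moreover have "0 < level_gt (h y)" using height_range[of y] elim assms by (intro level_gt_pos) auto
    ultimately show ?case using elim unfolding quotient by (simp add: pos_le_divide_eq)
  qed
  have upper: "\<forall>\<^sub>F y in at_left s. (h y - h s) / (y - s) \<le> 1 / level_ge (h s)"
    using ev
  proof eventually_elim
    case (elim y)
    then have "h s - h y \<le> (s - y) / level_ge (h s)" using height_increments(2)[of y s] assms by auto
    then show ?case using elim level_ge_pos[OF r] unfolding quotient by (simp add: pos_divide_le_eq)
  qed
  show ?thesis by (rule tendsto_sandwich[OF lower upper lim tendsto_const])
qed

definition height_kinks :: "real set" where
  "height_kinks = {s\<in>{0<..<1}. level_ge (h s) \<noteq> level_gt (h s)}"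

lemma height_has_derivative:
  assumes "s \<in> {0<..<1}" "s \<notin> height_kinks"
  shows "(h has_real_derivative 1 / level_gt (h s)) (at s)"
  unfolding has_field_derivative_iff filterlim_at_split
  using height_right_derivative[OF assms(1)] height_left_derivative[OF assms(1)] assms
  by (simp add: height_kinks_def)

lemma countable_height_kinks: "countable height_kinks"
proof (rule countable_image_inj_on)
  have "h ` height_kinks \<subseteq> {t\<in>{0<..}. level_ge t \<noteq> level_gt t}"
    using height_range by (auto simp: height_kinks_def)
  then show "countable (h ` height_kinks)"
    using countable_level_jumps by (rule countable_subset)
  show "inj_on h height_kinks"
    using strict_mono_on_imp_inj_on[OF height_strict_mono] by (rule inj_on_subset) (auto simp: height_kinks_def)
qed

lemma height_kinks_null: "height_kinks \<in> null_sets lborel"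
  by (rule countable_imp_null_set_lborel[OF countable_height_kinks])

lemma AE_height_has_derivative:
  "AE s in lborel. s \<in> {0<..<1} \<longrightarrow>
     (h has_real_derivative (1 / measure lborel {x. h s < \<rho> x})) (at s)"
  unfolding level_gt_def[symmetric] using AE_not_in[OF height_kinks_null]
  by eventually_elim (auto intro: height_has_derivative)

lemma deriv_height:
  assumes "s \<in> {0<..<1}" "h differentiable (at s)"
  shows "deriv h s = 1 / level_gt (h s)"
proof -
  have "((\<lambda>y. (h y - h s) / (y - s)) \<longlongrightarrow> deriv h s) (at s)"
    using assms(2) by (simp add: DERIV_deriv_iff_real_differentiable[symmetric] has_field_derivative_iff)
  then have "((\<lambda>y. (h y - h s) / (y - s)) \<longlongrightarrow> deriv h s) (at_right s)"
    by (simp add: filterlim_at_split)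
  then show ?thesis
    using tendsto_unique[OF _ _ height_right_derivative[OF assms(1)]] by auto
qed

lemma height_tendsto_at_0: "filterlim h (at_right 0) (at_right 0)"
  using filterlim_at_right_lower_endpoint_mono_on[OF strict_mono_on_imp_mono_on[OF height_strict_mono]
      height_image] by simp

lemma height_tendsto_at_1: "filterlim h (at_left M) (at_left 1)"
  using filterlim_at_left_upper_endpoint_mono_on[OF strict_mono_on_imp_mono_on[OF height_strict_mono]
      height_image] by simp

lemma deriv_height_tendsto_at_0:
  "(deriv h \<longlongrightarrow> (if emeasure lborel {x. 0 < \<rho> x} = \<infinity> then 0 else 1 / measure lborel {x. 0 < \<rho> x}))
     (at 0 within {s\<in>{0<..<1}. h differentiable (at s)})"
  (is "(deriv h \<longlongrightarrow> ?L) (at 0 within ?D)")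
proof -
  have "((\<lambda>s. 1 / level_gt (h s)) \<longlongrightarrow> ?L) (at_right 0)"
    using inverse_level_gt_tendsto_at_0 height_tendsto_at_0 by (rule filterlim_compose)
  then have "((\<lambda>s. 1 / level_gt (h s)) \<longlongrightarrow> ?L) (at 0 within ?D)"
    by (rule tendsto_mono[rotated]) (intro at_le, auto)
  moreover have "\<forall>\<^sub>F s in at 0 within ?D. 1 / level_gt (h s) = deriv h s"
    unfolding eventually_at_filter by (intro always_eventually) (auto simp: deriv_height)
  ultimately show ?thesis by (rule Lim_transform_eventually)
qed

lemma height_image_sublevel:
  assumes "0 \<le> r" "r \<le> M"
  shows "h ` {s\<in>{0<..<1}. h s < r} = {0<..<r}"
proof
  show "h ` {s\<in>{0<..<1}. h s < r} \<subseteq> {0<..<r}" using height_range by auto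
  show "{0<..<r} \<subseteq> h ` {s\<in>{0<..<1}. h s < r}"
  proof
    fix t assume t: "t \<in> {0<..<r}"
    then have "t \<in> h ` {0<..<1}" using height_image assms by auto
    then show "t \<in> h ` {s\<in>{0<..<1}. h s < r}" using t by auto
  qed
qed

lemma lmeasurable_height_sublevel: "{s\<in>{0<..<1}. h s < r} \<in> lmeasurable"
proof -
  have "open ({0<..<1} \<inter> h -` {..<r})"
    by (rule continuous_open_preimage[OF height_continuous]) auto
  moreover have "{0<..<1} \<inter> h -` {..<r} = {s\<in>{0<..<1}. h s < r}" by auto
  moreover have "bounded {s\<in>{0<..<1}. h s < r}"
    by (rule bounded_subset[of "cbox 0 1"]) auto
  ultimately show ?thesis by (intro lmeasurable_open) auto
qed

text \<open>Change of variables \<open>t = h s\<close>: off the null set of kinks, \<open>h\<close> maps the sublevel set onto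
  \<open>(0, r)\<close> minus a countable set.\<close>

lemma has_integral_inverse_level_gt_height:
  assumes "0 \<le> r" "r \<le> M"
  shows "((\<lambda>s. 1 / level_gt (h s)) has_integral r) ({s\<in>{0<..<1}. h s < r} - height_kinks)"
proof -
  define A where "A = {s\<in>{0<..<1}. h s < r}"
  define S where "S = A - height_kinks"
  define N where "N = h ` (A \<inter> height_kinks)"
  have inj: "inj_on h {0<..<1}"
    using height_strict_mono by (rule strict_mono_on_imp_inj_on)
  have S_sets: "S \<in> sets lebesgue"
    using lmeasurable_height_sublevel height_kinks_null unfolding S_def A_def by auto
  have "h ` (A - A \<inter> height_kinks) = h ` A - N"
    unfolding N_def by (rule inj_on_image_set_diff[OF inj]) (auto simp: A_def)
  moreover have "A - A \<inter> height_kinks = S" by (auto simp: S_def)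
  ultimately have image: "h ` S = {0<..<r} - N"
    using height_image_sublevel[OF assms] by (simp add: A_def)
  have N_null: "N \<in> null_sets lborel"
    unfolding N_def using countable_height_kinks by (intro countable_imp_null_set_lborel) auto
  then have N_sets: "{0<..<r} - N \<in> sets lborel" by auto
  have image_lmeasurable: "h ` S \<in> lmeasurable"
    unfolding image by (rule fmeasurableI2[of "{0<..<r}"]) (use N_sets in auto)
  have "measure lebesgue (h ` S) = measure lborel ({0<..<r} - N)"
    unfolding image using N_sets by simp
  also have "\<dots> = r"
    using measure_Diff_null_set[OF _ N_null, of "{0<..<r}"] assms by simp
  finally have image_integral:
    "(\<lambda>_. 1::real) absolutely_integrable_on h ` S \<and> integral (h ` S) (\<lambda>_. 1::real) = r"
    using lmeasure_integral[OF image_lmeasurable] image_lmeasurable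
    by (auto intro: absolutely_integrable_on_const)
  have derivative: "\<And>s. s \<in> S \<Longrightarrow> (h has_real_derivative 1 / level_gt (h s)) (at s within S)"
    using height_has_derivative by (auto simp: S_def A_def intro: has_field_derivative_at_within)
  have inj_S: "inj_on h S" using inj by (rule inj_on_subset) (auto simp: S_def A_def)
  have "(\<lambda>s. \<bar>1 / level_gt (h s)\<bar> * 1) absolutely_integrable_on S
      \<and> integral S (\<lambda>s. \<bar>1 / level_gt (h s)\<bar> * 1) = r"
    using has_absolute_integral_change_of_variables_1'[OF S_sets derivative inj_S] image_integral
    by (rule iffD2)
  then have "((\<lambda>s. \<bar>1 / level_gt (h s)\<bar>) has_integral r) S"
    using set_lebesgue_integral_eq_integral(1) integrable_integral by fastforce
  moreover have "\<bar>1 / level_gt (h s)\<bar> = 1 / level_gt (h s)" for s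
    by (simp add: level_gt_def)
  ultimately show ?thesis unfolding S_def A_def by simp
qed

lemma nn_integral_inverse_level_gt_height:
  assumes "0 \<le> r" "r \<le> M"
  shows "(\<integral>\<^sup>+ s. ennreal (1 / level_gt (h s)) * indicator {s\<in>{0<..<1}. h s < r} s \<partial>lborel) = ennreal r"
proof -
  have "(\<integral>\<^sup>+ s. ennreal (1 / level_gt (h s)) * indicator {s\<in>{0<..<1}. h s < r} s \<partial>lborel)
      = (\<integral>\<^sup>+ s. ennreal (1 / level_gt (h s)) * indicator ({s\<in>{0<..<1}. h s < r} - height_kinks) s \<partial>lborel)"
    using AE_not_in[OF height_kinks_null] by (intro nn_integral_cong_AE) (auto simp: indicator_def)
  also have "\<dots> = ennreal r"
    by (rule nn_integral_has_integral_lebesgue'[OF _ has_integral_inverse_level_gt_height[OF assms]])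
      (simp add: level_gt_def)
  finally show ?thesis .
qed

end

section \<open>Radially decreasing densities\<close>

locale radial_height_function = height_function +
  assumes radial: "\<And>x y. norm x \<le> norm y \<Longrightarrow> \<rho> y \<le> \<rho> x"
begin

lemma superlevel_cases:
  "{x. t < \<rho> x} = UNIV \<or> (\<exists>R\<ge>0. ball 0 R \<subseteq> {x. t < \<rho> x} \<and> {x. t < \<rho> x} \<subseteq> cball 0 R)"
proof (rule norm_downclosed_cases)
  fix x y :: 'a assume "x \<in> {x. t < \<rho> x}" "norm y \<le> norm x"
  then show "y \<in> {x. t < \<rho> x}" using radial[of y x] by simp
qed

lemma superlevel_ball:
  assumes "0 < t" "t < M"
  obtains R where "0 < R" "ball 0 R \<subseteq> {x. t < \<rho> x}" "{x. t < \<rho> x} \<subseteq> cball 0 R"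
    "level_gt t = unit_ball_vol TYPE('a) * R ^ DIM('a)"
proof -
  have "{x. t < \<rho> x} \<noteq> UNIV"
  proof
    assume "{x. t < \<rho> x} = UNIV"
    then show False using emeasure_superlevel_finite[OF assms(1)] by simp
  qed
  then obtain R where R: "0 \<le> R" "ball 0 R \<subseteq> {x. t < \<rho> x}" "{x. t < \<rho> x} \<subseteq> cball 0 R"
    using superlevel_cases[of t] by blast
  have "ennreal (level_gt t) = ennreal (unit_ball_vol TYPE('a) * R ^ DIM('a))"
    using emeasure_lborel_between_ball_cball[OF R(2,3)] R(1) emeasure_superlevel_eq[OF assms(1)]
    by simp
  then have volume: "level_gt t = unit_ball_vol TYPE('a) * R ^ DIM('a)"
    using R(1) unit_ball_vol_pos[where 'a='a] by (subst (asm) ennreal_inj) (auto simp: level_gt_def)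
  have "R \<noteq> 0"
  proof
    assume "R = 0"
    then have "level_gt t = 0" using volume by simp
    then show False using level_gt_pos[OF assms] by simp
  qed
  then show ?thesis using that[of R] R volume by simp
qed

lemma fsupp_cases:
  "fsupp \<rho> = UNIV \<and> {x. 0 < \<rho> x} = UNIV
   \<or> (\<exists>R>0. fsupp \<rho> = cball 0 R \<and> emeasure lborel {x. 0 < \<rho> x} = emeasure lborel (cball (0::'a) R))"
proof -
  let ?P = "{x. 0 < \<rho> x}"
  have "\<rho> x \<noteq> 0 \<longleftrightarrow> 0 < \<rho> x" for x
    using density_nonneg[of x] by linarith
  then have fsupp: "fsupp \<rho> = closure ?P"
    unfolding fsupp_def by simp
  from superlevel_cases[of 0] show ?thesis
  proof (elim disjE exE conjE)
    fix R :: real assume R: "0 \<le> R" "ball 0 R \<subseteq> ?P" "?P \<subseteq> cball 0 R"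
    have "R \<noteq> 0"
    proof
      assume "R = 0"
      then have "emeasure lborel ?P \<le> emeasure lborel {0::'a}" using R by (intro emeasure_mono) auto
      then show False using emeasure_superlevel_pos[OF M_pos] by simp
    qed
    with R have "0 < R" by simp
    have "closure ?P = cball 0 R"
      using closure_mono[OF R(2)] closure_minimal[OF R(3)] closure_ball[OF \<open>0 < R\<close>] by auto
    moreover have "emeasure lborel ?P = emeasure lborel (cball (0::'a) R)"
      using emeasure_lborel_between_ball_cball[OF R(2,3) _ R(1)]
        emeasure_lborel_between_ball_cball[OF ball_subset_cball[of "0::'a" R] order.refl _ R(1)] by simp
    ultimately show ?thesis using fsupp \<open>0 < R\<close> by auto
  qed (use fsupp in auto)
qed

lemma emeasure_fsupp: "emeasure lborel (fsupp \<rho>) = emeasure lborel {x. 0 < \<rho> x}"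
  using fsupp_cases by auto

lemma compact_fsupp_iff: "compact (fsupp \<rho>) \<longleftrightarrow> emeasure lborel {x. 0 < \<rho> x} < \<infinity>"
proof (cases "fsupp \<rho> = UNIV \<and> {x. 0 < \<rho> x} = UNIV")
  case True
  then show ?thesis using not_bounded_UNIV compact_imp_bounded by auto
next
  case False
  then obtain R where "fsupp \<rho> = cball 0 R" "emeasure lborel {x. 0 < \<rho> x} = emeasure lborel (cball (0::'a) R)"
    using fsupp_cases by blast
  then show ?thesis using emeasure_lborel_cball_finite[of "0::'a" R] by (simp add: less_top)
qed

lemma deriv_height_tendsto_at_0_support:
  "let L = (if emeasure lborel (fsupp \<rho>) = \<infinity> then 0 else 1 / measure lborel (fsupp \<rho>))
   in ((deriv h \<longlongrightarrow> L) (at 0 within {s\<in>{0<..<1}. h differentiable (at s)})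
       \<and> (compact (fsupp \<rho>) \<longleftrightarrow> L > 0))"
proof (cases "emeasure lborel {x. 0 < \<rho> x} = \<infinity>")
  case True
  then show ?thesis
    using deriv_height_tendsto_at_0 compact_fsupp_iff by (simp add: emeasure_fsupp Let_def)
next
  case False
  have "measure lborel (fsupp \<rho>) = measure lborel {x. 0 < \<rho> x}"
    using emeasure_fsupp by (simp add: measure_def)
  moreover have "0 < measure lborel {x. 0 < \<rho> x}"
    using emeasure_superlevel_pos[OF M_pos] False by (simp add: measure_def enn2real_positive_iff less_top)
  ultimately show ?thesis
    using deriv_height_tendsto_at_0 compact_fsupp_iff False
    by (simp add: emeasure_fsupp Let_def less_top[symmetric])
qed

definition level_radius :: "real \<Rightarrow> real" where
  "level_radius s = (level_gt (h s) / unit_ball_vol TYPE('a)) powr (1 / DIM('a))"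

lemma level_radius:
  assumes "s \<in> {0<..<1}"
  shows "ball 0 (level_radius s) \<subseteq> {x. h s < \<rho> x}" "{x. h s < \<rho> x} \<subseteq> cball 0 (level_radius s)"
proof -
  have "0 < h s" "h s < M" using height_range assms by auto
  then obtain R where R: "0 < R" "ball 0 R \<subseteq> {x. h s < \<rho> x}" "{x. h s < \<rho> x} \<subseteq> cball 0 R"
    "level_gt (h s) = unit_ball_vol TYPE('a) * R ^ DIM('a)"
    by (rule superlevel_ball)
  have "level_radius s = (R powr DIM('a)) powr (1 / DIM('a))"
    using R(1,4) unit_ball_vol_pos[where 'a='a] by (simp add: level_radius_def powr_realpow)
  also have "\<dots> = R" using R(1) by (simp add: powr_powr)
  finally show "ball 0 (level_radius s) \<subseteq> {x. h s < \<rho> x}" "{x. h s < \<rho> x} \<subseteq> cball 0 (level_radius s)"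
    using R by auto
qed

lemma level_radius_antimono: "antimono_on {0<..<1} level_radius"
proof (rule monotone_onI)
  fix s1 s2 :: real assume s: "s1 \<in> {0<..<1}" "s2 \<in> {0<..<1}" "s1 \<le> s2"
  have "h s1 \<le> h s2"
    using mono_onD[OF strict_mono_on_imp_mono_on[OF height_strict_mono] s] .
  then have "level_gt (h s2) \<le> level_gt (h s1)"
    using level_gt_antimono height_range[of s1] s(1) by simp
  then show "level_radius s2 \<le> level_radius s1"
    unfolding level_radius_def using unit_ball_vol_pos[where 'a='a]
    by (intro powr_mono2 divide_right_mono) (auto simp: level_gt_def)
qed

lemma level_radius_eq_deriv:
  assumes "s \<in> {0<..<1}" "s \<notin> height_kinks"
  shows "(unit_ball_vol TYPE('a) * deriv h s) powr (- 1 / DIM('a)) = level_radius s"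
proof -
  have "deriv h s = 1 / level_gt (h s)"
    using height_has_derivative[OF assms] by (rule DERIV_imp_deriv)
  moreover have "0 < level_gt (h s)" using level_gt_pos height_range assms by auto
  ultimately have "(unit_ball_vol TYPE('a) * deriv h s) powr (- 1 / DIM('a))
      = inverse ((unit_ball_vol TYPE('a) / level_gt (h s)) powr (1 / DIM('a)))"
    by (simp add: powr_minus_divide powr_minus[symmetric])
  also have "\<dots> = level_radius s"
    using \<open>0 < level_gt (h s)\<close> unit_ball_vol_pos[where 'a='a]
    by (simp add: level_radius_def powr_divide inverse_eq_divide)
  finally show ?thesis .
qed

text \<open>Avoiding the radii of rational levels leaves, by monotonicity, at most one level \<open>s\<close>
  whose ball has \<open>x\<close> on its boundary.\<close>

lemma layer_cake_at:
  assumes "\<rho> x \<le> M" and radii: "\<forall>q\<in>\<rat> \<inter> {0<..<1}. level_radius q \<noteq> norm x"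
  shows "ennreal (\<rho> x) = (\<integral>\<^sup>+ s\<in>{0<..<1}. ennreal (indicator
           (ball 0 ((unit_ball_vol TYPE('a) * deriv h s) powr (- 1 / real DIM('a)))) x * deriv h s) \<partial>lborel)"
proof -
  define Z where "Z = {s\<in>{0<..<1}. level_radius s = norm x}"
  have singleton: "Z \<subseteq> {z}" if "z \<in> Z" for z
    using antimono_on_eq_unique[OF level_radius_antimono radii] that by (auto simp: Z_def)
  have "countable Z"
  proof (cases "Z = {}")
    case False
    then obtain z where "z \<in> Z" by blast
    then show ?thesis using countable_subset[OF singleton] by blast
  qed simp
  then have "AE s in lborel. s \<notin> height_kinks \<union> Z"
    using countable_height_kinks by (intro AE_not_in countable_imp_null_set_lborel) auto
  then have "(\<integral>\<^sup>+ s\<in>{0<..<1}. ennreal (indicator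
           (ball 0 ((unit_ball_vol TYPE('a) * deriv h s) powr (- 1 / real DIM('a)))) x * deriv h s) \<partial>lborel)
      = (\<integral>\<^sup>+ s. ennreal (1 / level_gt (h s)) * indicator {s\<in>{0<..<1}. h s < \<rho> x} s \<partial>lborel)"
  proof (intro nn_integral_cong_AE, eventually_elim)
    case (elim s)
    show ?case
    proof (cases "s \<in> {0<..<1}")
      case True
      have "norm x \<noteq> level_radius s" using elim True by (auto simp: Z_def)
      then have "x \<in> ball 0 (level_radius s) \<longleftrightarrow> h s < \<rho> x"
        using level_radius[OF True] by (auto simp: subset_iff)
      moreover have "deriv h s = 1 / level_gt (h s)"
        using height_has_derivative[OF True] elim by (auto intro: DERIV_imp_deriv)
      ultimately show ?thesis
        using level_radius_eq_deriv[OF True] elim True by (auto simp: indicator_def)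
    qed (auto simp: indicator_def)
  qed
  also have "\<dots> = ennreal (\<rho> x)"
    using nn_integral_inverse_level_gt_height density_nonneg assms(1) by blast
  finally show ?thesis ..
qed

lemma layer_cake:
  "AE x in lborel. ennreal (\<rho> x) = (\<integral>\<^sup>+ s\<in>{0<..<1}. ennreal (indicator
     (ball 0 ((unit_ball_vol TYPE('a) * deriv h s) powr (- 1 / real DIM('a)))) x * deriv h s) \<partial>lborel)"
proof -
  have "AE x in lborel. level_radius q \<noteq> norm (x::'a)" for q
    using AE_not_in[OF sphere_in_null_sets_lborel[of 0 "level_radius q"]] by eventually_elim auto
  then have "AE x in lborel. \<forall>q\<in>\<rat> \<inter> {0<..<1}. level_radius q \<noteq> norm (x::'a)"
    by (subst AE_ball_countable) (auto intro: countable_Int1 countable_rat)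
  then show ?thesis using AE_density_le by eventually_elim (rule layer_cake_at)
qed

end

locale strictly_radial_height_function = height_function +
  assumes strictly_radial: "\<And>x y. 0 < \<rho> y \<Longrightarrow> norm x < norm y \<Longrightarrow> \<rho> y < \<rho> x"
begin

lemma level_set_null: assumes "0 < t" shows "{x. \<rho> x = t} \<in> null_sets lborel"
proof (cases "\<exists>x0. \<rho> x0 = t")
  case True
  then obtain x0 where x0: "\<rho> x0 = t" by blast
  have "{x. \<rho> x = t} \<subseteq> sphere 0 (norm x0)"
  proof
    fix y assume "y \<in> {x. \<rho> x = t}"
    then have "\<not> norm x0 < norm y" "\<not> norm y < norm x0"
      using strictly_radial[of y x0] strictly_radial[of x0 y] x0 assms by auto
    then show "y \<in> sphere 0 (norm x0)" by simp
  qed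
  moreover have "{x. \<rho> x = t} \<in> sets lborel" by measurable
  ultimately show ?thesis using null_sets_subset[OF sphere_in_null_sets_lborel] by blast
qed simp

lemma level_ge_eq_level_gt: assumes "0 < t" shows "level_ge t = level_gt t"
proof -
  have "{x. t \<le> \<rho> x} = {x. t < \<rho> x} \<union> {x. \<rho> x = t}" by auto
  then have "emeasure lborel {x. t \<le> \<rho> x} = emeasure lborel {x. t < \<rho> x}"
    using emeasure_Un_null_set[OF _ level_set_null[OF assms]] by simp
  then show ?thesis by (simp add: level_ge_def level_gt_def measure_def)
qed

lemma height_kinks_empty: "height_kinks = {}"
  using level_ge_eq_level_gt height_range by (auto simp: height_kinks_def)

lemma height_differentiable: "s \<in> {0<..<1} \<Longrightarrow> h differentiable (at s)"
  using height_has_derivative height_kinks_empty real_differentiable_def by blast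

lemma deriv_height_eq: "s \<in> {0<..<1} \<Longrightarrow> deriv h s = 1 / level_gt (h s)"
  using deriv_height height_differentiable by blast

lemma deriv_height_continuous: "continuous_on {0<..<1} (deriv h)"
proof -
  have level_gt_isCont: "isCont level_gt t" if "0 < t" for t
    using level_gt_tendsto_at_left[OF that] level_gt_tendsto_at_right[OF that] level_ge_eq_level_gt[OF that]
    by (simp add: isCont_def filterlim_at_split)
  have "isCont (\<lambda>s. 1 / level_gt (h s)) s" if s: "s \<in> {0<..<1}" for s
  proof -
    have "isCont (\<lambda>s. level_gt (h s)) s"
      using height_range s by (intro isCont_o2[OF height_isCont[OF s] level_gt_isCont]) auto
    moreover have "0 < level_gt (h s)" using level_gt_pos[of "h s"] height_range[of s] s by auto
    ultimately show ?thesis by (auto intro!: continuous_intros)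
  qed
  then have "continuous_on {0<..<1} (\<lambda>s. 1 / level_gt (h s))"
    by (intro continuous_at_imp_continuous_on ballI)
  then show ?thesis
    by (rule continuous_on_cong[THEN iffD1, rotated 2]) (auto simp: deriv_height_eq)
qed

lemma deriv_height_tendsto_at_1: "filterlim (deriv h) at_top (at_left 1)"
proof -
  have ev: "\<forall>\<^sub>F s in at_left 1. s \<in> {0<..<1::real}"
    using eventually_at_left_real[of 0 1] by simp
  have "level_ge M = 0"
    using level_ge_eq_level_gt[OF M_pos] null_setsD1[OF null_sets_superlevel_M]
    by (simp add: level_gt_def measure_def)
  then have "((\<lambda>s. level_gt (h s)) \<longlongrightarrow> 0) (at_left 1)"
    using filterlim_compose[OF level_gt_tendsto_at_left[OF M_pos] height_tendsto_at_1] by simp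
  moreover have "\<forall>\<^sub>F s in at_left 1. 0 < level_gt (h s)"
    using ev by eventually_elim (use level_gt_pos height_range in auto)
  ultimately have "filterlim (\<lambda>s. inverse (level_gt (h s))) at_top (at_left 1)"
    by (rule filterlim_inverse_at_top)
  moreover have "\<forall>\<^sub>F s in at_left 1. inverse (level_gt (h s)) = deriv h s"
    using ev by eventually_elim (simp add: deriv_height_eq inverse_eq_divide)
  ultimately show ?thesis
    by (rule filterlim_mono_eventually[OF _ order.refl order.refl])
qed

end

lemma (in height_function) deriv_height_if_strictly_radial:
  assumes "\<forall>x y. 0 < \<rho> y \<longrightarrow> norm x < norm y \<longrightarrow> \<rho> y < \<rho> x"
  shows "(\<forall>s\<in>{0<..<1}. h differentiable (at s)) \<and> continuous_on {0<..<1} (deriv h)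
    \<and> filterlim (deriv h) at_top (at_left 1)"
proof -
  interpret strictly_radial_height_function \<rho> M h
    using assms by unfold_locales auto
  show ?thesis using height_differentiable deriv_height_continuous deriv_height_tendsto_at_1 by blast
qed

lemma prob_density_bounded_density:
  fixes \<rho> :: "'a::euclidean_space \<Rightarrow> real"
  assumes "prob_density \<rho>" "Linf_norm \<rho> < \<infinity>"
  obtains M where "bounded_density \<rho> M" "Linf_norm \<rho> = ereal M"
proof -
  have nonneg: "0 \<le> \<rho> x" for x using assms(1) by (simp add: prob_density_def)
  then have Linf: "Linf_norm \<rho> = esssup lborel (\<lambda>x. ereal (\<rho> x))"
    by (simp add: Linf_norm_def)
  have "Linf_norm \<rho> \<noteq> -\<infinity>"
  proof
    assume "Linf_norm \<rho> = -\<infinity>"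
    then have "AE x in (lborel::'a measure). False"
      using esssup_AE[of "\<lambda>x. ereal (\<rho> x)" lborel] Linf by simp
    then show False by (simp add: ae_filter_eq_bot_iff)
  qed
  with assms(2) obtain M where M: "Linf_norm \<rho> = ereal M" by (cases "Linf_norm \<rho>") auto
  have "bounded_density \<rho> M"
    using assms(1) M Linf by unfold_locales (auto simp: prob_density_def)
  with M show ?thesis using that by blast
qed

theorem lemma2p1:
  fixes \<rho> :: "'a::euclidean_space \<Rightarrow> real" and h :: "real \<Rightarrow> real"
  assumes dens: "prob_density \<rho>"
    and Linf: "Linf_norm \<rho> < \<infinity>"
    and rad: "radially_decreasing \<rho>"
    and height: "\<And>s. 0 < s \<Longrightarrow> s < 1 \<Longrightarrow> integral\<^sup>L lborel (\<lambda>x. min (\<rho> x) (h s)) = s"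
  shows
    \<comment> \<open>(a)\<close>
    "(\<forall>s\<in>{0<..<1}. 0 < h s \<and> ereal (h s) < Linf_norm \<rho>)
     \<and> continuous_on {0<..<1} h
     \<and> strict_mono_on {0<..<1} h
     \<and> convex_on {0<..<1} h
     \<and> (AE s in lborel. s \<in> {0<..<1} \<longrightarrow>
           (h has_real_derivative (1 / measure lborel {x. h s < \<rho> x})) (at s))
     \<comment> \<open>(b)\<close>
     \<and> (let L = (if emeasure lborel (fsupp \<rho>) = \<infinity> then 0
                  else 1 / measure lborel (fsupp \<rho>))
        in ((deriv h \<longlongrightarrow> L) (at 0 within {s\<in>{0<..<1}. h differentiable (at s)})
            \<and> (compact (fsupp \<rho>) \<longleftrightarrow> L > 0)))
     \<comment> \<open>(c)\<close>
     \<and> (AE x in lborel. ennreal (\<rho> x) =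
          (\<integral>\<^sup>+ s\<in>{0<..<1}. ennreal (indicator
               (ball 0 ((unit_ball_vol TYPE('a) * deriv h s) powr (- 1 / real DIM('a)))) x
               * deriv h s) \<partial>lborel))
     \<comment> \<open>(d)\<close>
     \<and> ((\<forall>x y. 0 < \<rho> y \<longrightarrow> norm x < norm y \<longrightarrow> \<rho> y < \<rho> x) \<longrightarrow>
          ((\<forall>s\<in>{0<..<1}. h differentiable (at s)) \<and> continuous_on {0<..<1} (deriv h)
           \<and> filterlim (deriv h) at_top (at_left 1)))"
proof -
  obtain M where "bounded_density \<rho> M" and Linf_eq: "Linf_norm \<rho> = ereal M"
    using prob_density_bounded_density[OF dens Linf] .
  then interpret radial_height_function \<rho> M h
    using height rad
    by (intro radial_height_function.intro height_function.intro radial_height_function_axioms.intro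
        height_function_axioms.intro) (auto simp: radially_decreasing_def)
  show ?thesis
    using height_range Linf_eq height_continuous height_strict_mono height_convex
      AE_height_has_derivative deriv_height_tendsto_at_0_support layer_cake
      deriv_height_if_strictly_radial
    by auto
qed

end
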